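(* Fix $a>1$. For $n\ge1$ let $\mathsf{F}$ be the $n\times n$ lower-triangular matrix with ones on the diagonal, $-a$ on the first subdiagonal and zeros elsewhere, and let $\mu_{n,1},\ldots,\mu_{n,n}$ be the eigenvalues of $\mathsf{F}'\mathsf{F}$. Let $\alpha'=\inf_{n\in\mathbb{N},i\in[n]}\mu_{n,i}$ and $\beta=(a+1)^2$, and let $g(w)=1+a^2-2a\cos w$. For any bounded, $L$-Lipschitz function $F$ on $[\alpha',\beta]$ that is nondecreasing (or nonincreasing), there is a constant $C_L>0$ depending only on $L$ and $\max|F|$ such that for all $n\ge1$, $$\left|\frac1n\sum_{i=1}^nF(\mu_{n,i})-\frac1{2\pi}\int_{-\pi}^{\pi}F(g(w))\,dw\right|\le\frac{C_L}n.$$ *)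

theory Defs
  imports "HOL-Analysis.Analysis" "Jordan_Normal_Form.Char_Poly"
begin

definition Fmat :: "real \<Rightarrow> nat \<Rightarrow> real mat" where
  "Fmat a n = mat n n (\<lambda>(i, j). if i = j then 1 else if i = j + 1 then - a else 0)"

text \<open>The multiset of eigenvalues (with algebraic multiplicity) of a real square matrix whose
  characteristic polynomial splits over the reals (as for the symmetric matrix F'F).\<close>
definition eigenvalues_mset :: "real mat \<Rightarrow> real multiset" where
  "eigenvalues_mset A = (THE M. char_poly A = prod_mset (image_mset (\<lambda>x. [:- x, 1:]) M))"

definition mus :: "real \<Rightarrow> nat \<Rightarrow> real multiset" where
  "mus a n = eigenvalues_mset (transpose_mat (Fmat a n) * Fmat a n)"

definition alpha' :: "real \<Rightarrow> real" where
  "alpha' a = Inf (\<Union>n\<in>{1..}. set_mset (mus a n))"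

definition beta :: "real \<Rightarrow> real" where
  "beta a = (a + 1)^2"

definition gsym :: "real \<Rightarrow> real \<Rightarrow> real" where
  "gsym a w = 1 + a^2 - 2 * a * cos w"

end

theory Submission
  imports Defs
begin

(* F'F is tridiagonal, with off-diagonal entries -a and diagonal entries 1 + a^2 except for the
   last one, which is 1. Expanding along the last row, its characteristic polynomial is
   p_n + a^2 p_(n-1), where p_k is the characteristic polynomial of the k x k tridiagonal Toeplitz
   matrix with symbol g, and sin t * p_k(g t) = (-a)^k sin((k+1) t). Evaluated at 0 and at the
   points g(j pi/(n+1)), the characteristic polynomial alternates in sign, so the eigenvalues
   interlace: 0 < mu_1 < g(pi/(n+1)) < mu_2 < ... < g(n pi/(n+1)) < mu_n. For monotone F the sum
   of the F(mu_i) is therefore within 2 max|F| of the Riemann sum of F o g on [0, pi] with step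
   pi/(n+1), which is within max|F| pi/(n+1) of the integral. *)

section \<open>Continuants and tridiagonal determinants\<close>

fun continuant :: "(nat \<Rightarrow> 'a::comm_ring_1) \<Rightarrow> (nat \<Rightarrow> 'a) \<Rightarrow> nat \<Rightarrow> 'a" where
  "continuant d e 0 = 1"
| "continuant d e (Suc 0) = d 0"
| "continuant d e (Suc (Suc k)) = d (Suc k) * continuant d e (Suc k) - e k * continuant d e k"

definition tridiag_mat :: "nat \<Rightarrow> (nat \<Rightarrow> 'a::zero) \<Rightarrow> (nat \<Rightarrow> 'a) \<Rightarrow> (nat \<Rightarrow> 'a) \<Rightarrow> 'a mat" where
  "tridiag_mat n d l u = mat n n (\<lambda>(i, j).
     if i = j then d i else if i = Suc j then l j else if j = Suc i then u i else 0)"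

lemma tridiag_mat_carrier [simp]: "tridiag_mat n d l u \<in> carrier_mat n n"
  by (simp add: tridiag_mat_def)

lemma tridiag_mat_delete_last: "mat_delete (tridiag_mat (Suc n) d l u) n n = tridiag_mat n d l u"
  by (rule eq_matI) (auto simp: tridiag_mat_def mat_delete_def)

lemma det_tridiag_mat_Suc_Suc:
  fixes d l u :: "nat \<Rightarrow> 'a::comm_ring_1"
  defines "T \<equiv> \<lambda>k. tridiag_mat k d l u"
  shows "det (T (Suc (Suc k))) = d (Suc k) * det (T (Suc k)) - l k * u k * det (T k)"
proof -
  let ?B = "T (Suc (Suc k))"
  have B: "?B \<in> carrier_mat (Suc (Suc k)) (Suc (Suc k))" by (simp add: T_def)
  define C where "C = mat_delete ?B (Suc k) k"
  have C: "C \<in> carrier_mat (Suc k) (Suc k)" using mat_delete_carrier[OF B] by (simp add: C_def)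
  have C_last_col: "C $$ (i, k) = (if i = k then u k else 0)" if "i < Suc k" for i
    using that by (auto simp: C_def T_def tridiag_mat_def mat_delete_def)
  have C_minor: "mat_delete C k k = T k"
    by (rule eq_matI) (auto simp: C_def T_def tridiag_mat_def mat_delete_def)
  have "det C = (\<Sum>i<Suc k. C $$ (i, k) * cofactor C i k)"
    by (rule laplace_expansion_column[OF C]) simp
  also have "\<dots> = u k * det (T k)"
    by (subst sum.lessThan_Suc, subst sum.neutral) (auto simp: C_last_col C_minor cofactor_def)
  finally have detC: "det C = u k * det (T k)" .
  have "det ?B = (\<Sum>j<Suc (Suc k). ?B $$ (Suc k, j) * cofactor ?B (Suc k) j)"
    by (rule laplace_expansion_row[OF B]) simp
  also have "\<dots> = l k * cofactor ?B (Suc k) k + d (Suc k) * cofactor ?B (Suc k) (Suc k)"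
    by (subst sum.lessThan_Suc, subst sum.lessThan_Suc, subst sum.neutral)
       (auto simp: T_def tridiag_mat_def)
  finally show ?thesis
    using detC by (simp add: cofactor_def C_def T_def tridiag_mat_delete_last)
qed

lemma det_tridiag_mat:
  "det (tridiag_mat n d l u) = continuant d (\<lambda>i. l i * u i) n"
proof (induction d "\<lambda>i. l i * u i" n rule: continuant.induct)
  case (1 d)
  then show ?case by (simp add: tridiag_mat_def)
next
  case (2 d)
  then show ?case by (simp add: tridiag_mat_def det_single)
next
  case (3 d k)
  then show ?case by (simp add: det_tridiag_mat_Suc_Suc)
qed

lemma poly_char_poly_tridiag_mat:
  fixes d l u :: "nat \<Rightarrow> 'a::comm_ring_1"
  shows "poly (char_poly (tridiag_mat n d l u)) x = continuant (\<lambda>i. x - d i) (\<lambda>i. l i * u i) n"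
proof -
  have "poly (char_poly (tridiag_mat n d l u)) x
      = det (tridiag_mat n (\<lambda>i. x - d i) (\<lambda>i. - l i) (\<lambda>i. - u i))"
    unfolding char_poly_def
    by (rule poly_det_cong[of _ n]) (auto simp: char_poly_matrix_def tridiag_mat_def)
  then show ?thesis
    by (simp add: det_tridiag_mat)
qed

lemma continuant_cong:
  "(\<And>i. i < k \<Longrightarrow> d i = d' i) \<Longrightarrow> continuant d e k = continuant d' e k"
  by (induction d e k rule: continuant.induct) auto

lemma continuant_update_last:
  "continuant (d(m := d m + c)) e (Suc m) = continuant d e (Suc m) + c * continuant d e m"
proof (cases m)
  case (Suc k)
  have "continuant (d(m := d m + c)) e j = continuant d e j" if "j \<le> m" for j
    using that by (intro continuant_cong) auto
  then show ?thesis
    using Suc by (simp add: algebra_simps)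
qed simp

lemma sin_mult_continuant_const:
  fixes r t :: real
  shows "sin t * continuant (\<lambda>_. 2 * r * cos t) (\<lambda>_. r\<^sup>2) k = r ^ k * sin (real (Suc k) * t)"
proof (induction "\<lambda>_::nat. 2 * r * cos t" "\<lambda>_::nat. r\<^sup>2" k rule: continuant.induct)
  case 1
  then show ?case by simp
next
  case 2
  then show ?case by (simp add: sin_double)
next
  case (3 k)
  have sin_rec: "sin (real (Suc (Suc k)) * t + t)
      = 2 * cos t * sin (real (Suc (Suc k)) * t) - sin (real (Suc k) * t)"
    using sin_add[of "real (Suc (Suc k)) * t" t] sin_diff[of "real (Suc (Suc k)) * t" t]
    by (simp add: algebra_simps)
  have "sin t * continuant (\<lambda>_. 2 * r * cos t) (\<lambda>_. r\<^sup>2) (Suc (Suc k))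
      = r ^ Suc (Suc k) * (2 * cos t * sin (real (Suc (Suc k)) * t) - sin (real (Suc k) * t))"
    using 3 by (simp add: algebra_simps power2_eq_square)
  then show ?case
    by (simp only: sin_rec[symmetric]) (simp add: algebra_simps)
qed

section \<open>Polynomials that split into linear factors\<close>

lemma order_prod_mset_linear_factors:
  fixes x :: "'a::idom"
  shows "order x (prod_mset (image_mset (\<lambda>y. [:- y, 1:]) M)) = count M x"
proof (induction M)
  case (add y M)
  have "prod_mset (image_mset (\<lambda>y. [:- y, 1:]) M) \<noteq> 0"
    by (auto simp: prod_mset_zero_iff)
  then have nz: "[:- y, 1:] * prod_mset (image_mset (\<lambda>y. [:- y, 1:]) M) \<noteq> 0"
    by (intro no_zero_divisors) simp_all
  have linear: "order x [:- y, 1:] = (if x = y then 1 else 0)"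
    using order_power_n_n[of x 1] by (auto intro: order_0I)
  show ?case
    unfolding image_mset_add_mset prod_mset.add_mset order_mult[OF nz] linear add.IH by simp
qed simp

lemma prod_mset_linear_factors_inject:
  fixes M N :: "'a::idom multiset"
  assumes "prod_mset (image_mset (\<lambda>x. [:- x, 1:]) M) = prod_mset (image_mset (\<lambda>x. [:- x, 1:]) N)"
  shows "M = N"
  by (rule multiset_eqI) (metis assms order_prod_mset_linear_factors)

lemma eigenvalues_mset_eqI:
  assumes "char_poly A = prod_mset (image_mset (\<lambda>x. [:- x, 1:]) M)"
  shows "eigenvalues_mset A = M"
  unfolding eigenvalues_mset_def
  by (rule the_equality) (use assms prod_mset_linear_factors_inject in auto)

lemma monic_poly_eq_prod_roots:
  fixes p :: "'a::idom poly"
  assumes "finite A" "degree p = card A" "lead_coeff p = 1" "\<And>x. x \<in> A \<Longrightarrow> poly p x = 0"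
  shows "p = (\<Prod>x\<in>A. [:- x, 1:])"
proof (rule poly_eqI_degree_lead_coeff[of _ "card A" _ A])
  have deg: "degree (\<Prod>x\<in>A. [:- x, 1:]) = card A"
    using assms(1) by (simp add: degree_prod_eq_sum_degree)
  moreover have "lead_coeff (\<Prod>x\<in>A. [:- x, 1:]) = 1"
    by (simp add: lead_coeff_prod)
  ultimately show "coeff p (card A) = coeff (\<Prod>x\<in>A. [:- x, 1:]) (card A)"
    and "degree (\<Prod>x\<in>A. [:- x, 1:]) \<le> card A"
    using assms(2,3) by simp_all
  show "poly p z = poly (\<Prod>x\<in>A. [:- x, 1:]) z" if "z \<in> A" for z
    using that assms(1,4) by (simp add: poly_prod prod_zero_iff)
qed (use assms(2) in simp_all)

section \<open>The characteristic polynomial of F'F\<close>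

lemma dim_Fmat [simp]: "dim_row (Fmat a n) = n" "dim_col (Fmat a n) = n"
  by (simp_all add: Fmat_def)

lemma Fmat_carrier: "Fmat a n \<in> carrier_mat n n"
  by (simp add: Fmat_def)

abbreviation FtF :: "real \<Rightarrow> nat \<Rightarrow> real mat" where
  "FtF a n \<equiv> transpose_mat (Fmat a n) * Fmat a n"

lemma FtF_carrier: "FtF a n \<in> carrier_mat n n"
  using Fmat_carrier by (intro mult_carrier_mat) simp_all

lemma FtF_eq_tridiag_mat:
  "FtF a n = tridiag_mat n (\<lambda>i. if i = n - 1 then 1 else 1 + a\<^sup>2) (\<lambda>_. - a) (\<lambda>_. - a)"
proof -
  let ?f = "\<lambda>i k. if k = i then 1 else if k = i + 1 then - a else (0::real)"
  have entry: "FtF a n $$ (i, j) = ?f j i + (if i + 1 < n then - a * ?f j (i + 1) else 0)"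
    if "i < n" "j < n" for i j
  proof -
    have "FtF a n $$ (i, j) = (\<Sum>k<n. ?f i k * ?f j k)"
      using that by (simp add: Fmat_def scalar_prod_def atLeast0LessThan)
    also have "\<dots> = (\<Sum>k<n. (if k = i then ?f j i else 0)
        + (if k = i + 1 then - a * ?f j (i + 1) else 0))"
      by (rule sum.cong) auto
    finally show ?thesis
      using that by (simp add: sum.distrib)
  qed
  show ?thesis
    by (rule eq_matI)
      (auto simp: entry tridiag_mat_def power2_eq_square simp del: index_mult_mat(1))
qed

lemma poly_char_poly_FtF:
  assumes "n \<ge> 1"
  shows "poly (char_poly (FtF a n)) x
    = continuant (\<lambda>_. x - 1 - a\<^sup>2) (\<lambda>_. a\<^sup>2) n
      + a\<^sup>2 * continuant (\<lambda>_. x - 1 - a\<^sup>2) (\<lambda>_. a\<^sup>2) (n - 1)"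
proof -
  obtain m where n: "n = Suc m" using assms by (cases n) auto
  have "(\<lambda>i. x - (if i = n - 1 then 1 else 1 + a\<^sup>2)) = (\<lambda>_. x - 1 - a\<^sup>2)(m := x - 1 - a\<^sup>2 + a\<^sup>2)"
    using n by auto
  then show ?thesis
    using continuant_update_last[of "\<lambda>_. x - 1 - a\<^sup>2" m "a\<^sup>2"]
    by (simp add: FtF_eq_tridiag_mat poly_char_poly_tridiag_mat n power2_eq_square)
qed

lemma poly_char_poly_FtF_0: "poly (char_poly (FtF a n)) 0 = (-1) ^ n"
proof -
  note F = Fmat_carrier[of a n]
  have "diag_mat (Fmat a n) = replicate n 1"
    by (rule nth_equalityI) (auto simp: diag_mat_def Fmat_def)
  then have "det (Fmat a n) = 1"
    using F by (subst det_lower_triangular[of n]) (auto simp: Fmat_def)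
  then have "det (FtF a n) = 1"
    using F by (simp add: det_mult[of _ n] det_transpose)
  moreover have "- char_matrix (FtF a n) 0 = (-1) \<cdot>\<^sub>m FtF a n"
    by (rule eq_matI) (auto simp: char_matrix_def)
  ultimately show ?thesis
    using F by (simp add: char_poly_matrix[of _ n])
qed

section \<open>Interlacing of the eigenvalues\<close>

lemma gsym_0: "gsym a 0 = (a - 1)\<^sup>2"
  by (simp add: gsym_def power2_eq_square algebra_simps)

lemma gsym_minus: "gsym a (- w) = gsym a w"
  by (simp add: gsym_def)

lemma gsym_bounds:
  assumes "a > 0"
  shows "(a - 1)\<^sup>2 \<le> gsym a w" "gsym a w \<le> (a + 1)\<^sup>2"
proof -
  have "- a \<le> a * cos w" "a * cos w \<le> a"
    using assms mult_left_mono[of "cos w" 1 a] mult_left_mono[of "-1" "cos w" a] by auto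
  then show "(a - 1)\<^sup>2 \<le> gsym a w" "gsym a w \<le> (a + 1)\<^sup>2"
    by (simp_all add: gsym_def power2_eq_square algebra_simps)
qed

lemma gsym_strict_mono:
  "a > 0 \<Longrightarrow> 0 \<le> u \<Longrightarrow> u < v \<Longrightarrow> v \<le> pi \<Longrightarrow> gsym a u < gsym a v"
  unfolding gsym_def using cos_monotone_0_pi[of u v] by simp

lemma gsym_mono_on:
  assumes "a > 0"
  shows "mono_on {0..pi} (gsym a)"
proof (rule mono_onI)
  fix u v assume "u \<in> {0..pi}" "v \<in> {0..pi}" "u \<le> v"
  then show "gsym a u \<le> gsym a v"
    using gsym_strict_mono[OF assms, of u v] by (cases "u = v") auto
qed

lemma node_angle_less_pi:
  assumes "j \<le> n"
  shows "real j * pi / real (Suc n) < pi"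
proof -
  have "real j * pi < real (Suc n) * pi"
    using assms by (intro mult_strict_right_mono) auto
  then show ?thesis
    by (simp add: divide_less_eq)
qed

text \<open>For \<open>1 \<le> j \<le> n\<close> these are the eigenvalues \<open>g(j\<pi>/(n+1))\<close> of the tridiagonal Toeplitz
  matrix that differs from \<open>F'F\<close> only in the last diagonal entry.\<close>
definition interlacing_node :: "real \<Rightarrow> nat \<Rightarrow> nat \<Rightarrow> real" where
  "interlacing_node a n j = (if j = 0 then 0 else gsym a (real j * pi / real (Suc n)))"

lemma interlacing_node_strict_mono:
  assumes "a > 0" "j < k" "k \<le> n"
  shows "interlacing_node a n j < interlacing_node a n k"
proof -
  have "real k * pi / real (Suc n) \<le> pi"
    using node_angle_less_pi[OF assms(3)] by simp
  moreover have "real j * pi / real (Suc n) < real k * pi / real (Suc n)"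
    using assms by (simp add: divide_strict_right_mono)
  ultimately have "gsym a (real j * pi / real (Suc n)) < gsym a (real k * pi / real (Suc n))"
    using assms(1) by (intro gsym_strict_mono) auto
  moreover have "0 \<le> gsym a (real j * pi / real (Suc n))"
    using gsym_bounds(1)[OF assms(1)] by (rule order.trans[OF zero_le_power2])
  ultimately show ?thesis
    using assms by (auto simp: interlacing_node_def)
qed

lemma interlacing_node_bounds:
  assumes "a > 0"
  shows "0 \<le> interlacing_node a n j" "interlacing_node a n j \<le> (a + 1)\<^sup>2"
  using gsym_bounds[OF assms] order.trans[OF zero_le_power2]
  by (auto simp: interlacing_node_def)

lemma sign_char_poly_FtF_at_node:
  assumes "a > 0" "n \<ge> 1" "j \<le> n"
  shows "(-1) ^ (n + j) * poly (char_poly (FtF a n)) (interlacing_node a n j) > 0"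
proof (cases "j = 0")
  case True
  then show ?thesis
    by (simp add: interlacing_node_def poly_char_poly_FtF_0 flip: power_add)
next
  case False
  define t where "t = real j * pi / real (Suc n)"
  define K where "K = continuant (\<lambda>_. gsym a t - 1 - a\<^sup>2) (\<lambda>_. a\<^sup>2)"
  obtain m where n: "n = Suc m" using assms(2) by (cases n) auto
  have "0 < t" "t < pi"
    using False node_angle_less_pi[OF assms(3)] by (auto simp: t_def)
  then have sin_t: "sin t > 0" by (rule sin_gt_zero)
  have K: "sin t * K k = (- a) ^ k * sin (real (Suc k) * t)" for k
    using sin_mult_continuant_const[of t "- a" k] by (simp add: K_def gsym_def)
  have angle_n: "real (Suc n) * t = real j * pi"
    by (simp add: t_def)
  then have angle_m: "real (Suc m) * t = real j * pi - t"
    by (simp add: n algebra_simps)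
  have "sin t * K n = sin t * 0" "sin t * K m = sin t * ((- a) ^ m * (-1) ^ Suc j)"
    unfolding K angle_n angle_m by (simp_all add: sin_diff)
  then have K_n: "K n = 0" and K_m: "K m = (- a) ^ m * (-1) ^ Suc j"
    unfolding mult_left_cancel[OF less_imp_neq[OF sin_t, symmetric]] .
  have "interlacing_node a n j = gsym a t"
    using False by (simp add: interlacing_node_def t_def)
  then have "poly (char_poly (FtF a n)) (interlacing_node a n j) = K n + a\<^sup>2 * K m"
    using poly_char_poly_FtF[OF assms(2)] by (simp add: K_def n)
  also have "\<dots> = a\<^sup>2 * (- a) ^ m * (-1) ^ Suc j"
    by (simp add: K_n K_m)
  also have "\<dots> = (-1) ^ (n + j) * a ^ Suc n"
    unfolding n power_minus[of a m] by (simp add: power_add power2_eq_square)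
  finally show ?thesis
    using assms(1) by (simp flip: power_add)
qed

lemma char_poly_FtF_root_between:
  assumes "a > 0" "n \<ge> 1" "j < n"
  shows "\<exists>x. interlacing_node a n j < x \<and> x < interlacing_node a n (Suc j)
    \<and> poly (char_poly (FtF a n)) x = 0"
proof -
  let ?P = "\<lambda>j. poly (char_poly (FtF a n)) (interlacing_node a n j)"
  have "0 < ((-1) ^ (n + j) * ?P j) * ((-1) ^ (n + Suc j) * ?P (Suc j))"
    using assms by (intro mult_pos_pos sign_char_poly_FtF_at_node) auto
  also have "\<dots> = - (?P j * ?P (Suc j))"
    by (simp add: algebra_simps flip: power_add)
  finally show ?thesis
    using poly_IVT[OF interlacing_node_strict_mono[OF assms(1) lessI]] assms(3) by auto
qed

lemma mus_interlacing:
  assumes "a > 0" "n \<ge> 1"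
  obtains r where "\<And>j. j < n \<Longrightarrow> interlacing_node a n j < r j \<and> r j < interlacing_node a n (Suc j)"
    and "mus a n = image_mset r (mset_set {..<n})"
proof -
  obtain r where r: "\<And>j. j < n \<Longrightarrow> interlacing_node a n j < r j \<and> r j < interlacing_node a n (Suc j)
      \<and> poly (char_poly (FtF a n)) (r j) = 0"
    using char_poly_FtF_root_between[OF assms] by metis
  have r_less: "r j < r k" if "j < k" "k < n" for j k
  proof -
    have "interlacing_node a n (Suc j) \<le> interlacing_node a n k"
      using that interlacing_node_strict_mono[OF assms(1), of "Suc j" k n]
      by (cases "Suc j = k") auto
    then show ?thesis
      using r[of j] r[of k] that by linarith
  qed
  then have inj: "inj_on r {..<n}"
    by (metis inj_on_def lessThan_iff linorder_neqE_nat less_irrefl)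
  have "degree (char_poly (FtF a n)) = n" "lead_coeff (char_poly (FtF a n)) = 1"
    using degree_monic_char_poly[OF FtF_carrier] by auto
  then have "char_poly (FtF a n) = (\<Prod>x\<in>r ` {..<n}. [:- x, 1:])"
    using r inj by (intro monic_poly_eq_prod_roots) (auto simp: card_image)
  then have "mus a n = mset_set (r ` {..<n})"
    unfolding mus_def by (intro eigenvalues_mset_eqI) (simp add: prod_unfold_prod_mset)
  then show ?thesis
    using that[of r] r image_mset_mset_set[OF inj] by simp
qed

lemma mus_bounds:
  assumes "a > 0" "n \<ge> 1" "x \<in># mus a n"
  shows "0 < x" "x < (a + 1)\<^sup>2"
proof -
  obtain r where r: "\<And>j. j < n \<Longrightarrow> interlacing_node a n j < r j \<and> r j < interlacing_node a n (Suc j)"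
    and mus: "mus a n = image_mset r (mset_set {..<n})"
    using mus_interlacing[OF assms(1,2)] by blast
  obtain j where "j < n" "x = r j"
    using assms(3) by (auto simp: mus)
  then show "0 < x" "x < (a + 1)\<^sup>2"
    using r[of j] interlacing_node_bounds[OF assms(1), of n] by (metis le_less_trans less_le_trans)+
qed

lemma alpha'_le_mus:
  assumes "a > 0" "n \<ge> 1" "x \<in># mus a n"
  shows "alpha' a \<le> x"
  unfolding alpha'_def
proof (rule cInf_lower)
  show "x \<in> (\<Union>n\<in>{1..}. set_mset (mus a n))"
    using assms by auto
  show "bdd_below (\<Union>n\<in>{1..}. set_mset (mus a n))"
    using mus_bounds(1)[OF assms(1)] by (intro bdd_belowI[of _ 0]) (auto intro: less_imp_le)
qed

text \<open>The smallest eigenvalue lies below \<open>g(\<pi>/(n+1))\<close>, which tends to \<open>g 0 = (a-1)\<^sup>2\<close>.\<close>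
lemma alpha'_le_min_gsym:
  assumes "a > 0"
  shows "alpha' a \<le> (a - 1)\<^sup>2"
proof -
  have "alpha' a \<le> gsym a (pi / real (Suc n))" if n: "n \<ge> 1" for n
  proof -
    obtain r where r: "\<And>j. j < n \<Longrightarrow> interlacing_node a n j < r j \<and> r j < interlacing_node a n (Suc j)"
      and mus: "mus a n = image_mset r (mset_set {..<n})"
      using mus_interlacing[OF assms n] by blast
    have "alpha' a \<le> r 0"
      using n by (intro alpha'_le_mus[OF assms n]) (simp add: mus)
    also have "r 0 < gsym a (pi / real (Suc n))"
      using r[of 0] n by (simp add: interlacing_node_def)
    finally show ?thesis by simp
  qed
  moreover have "(\<lambda>n. gsym a (pi / real (Suc n))) \<longlonglongrightarrow> gsym a 0"
    unfolding gsym_def by (intro tendsto_intros LIMSEQ_Suc[OF lim_const_over_n])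
  ultimately show ?thesis
    unfolding gsym_0[symmetric] by (intro LIMSEQ_le_const) auto
qed

lemma gsym_mem_domain:
  assumes "a > 0"
  shows "gsym a w \<in> {alpha' a..beta a}"
  using alpha'_le_min_gsym[OF assms] gsym_bounds[OF assms, of w] by (simp add: beta_def)

lemma mus_mem_domain:
  assumes "a > 0" "n \<ge> 1" "x \<in># mus a n"
  shows "x \<in> {alpha' a..beta a}"
  using alpha'_le_mus[OF assms] mus_bounds(2)[OF assms] by (simp add: beta_def)

section \<open>Sums and integrals of monotone functions\<close>

lemma integral_even_real:
  fixes h :: "real \<Rightarrow> real"
  assumes "c \<ge> 0" "continuous_on {-c..c} h" "\<And>x. h (- x) = h x"
  shows "integral {-c..c} h = 2 * integral {0..c} h"
proof -
  have "integral {-c..0} h + integral {0..c} h = integral {-c..c} h"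
    using assms(1,2)
    by (intro Henstock_Kurzweil_Integration.integral_combine integrable_continuous_interval) auto
  moreover have "integral {-c..0} h = integral {0..c} h"
    using Henstock_Kurzweil_Integration.integral_reflect_real[of c 0 h] by (simp add: assms(3))
  ultimately show ?thesis by simp
qed

lemma integral_bounds_mono_on:
  fixes h :: "real \<Rightarrow> real"
  assumes "u \<le> v" "continuous_on {u..v} h" "mono_on {u..v} h"
  shows "(v - u) * h u \<le> integral {u..v} h" "integral {u..v} h \<le> (v - u) * h v"
proof -
  have integrable: "h integrable_on {u..v}"
    using assms(2) by (rule integrable_continuous_interval)
  have bounds: "h u \<le> h x" "h x \<le> h v" if "x \<in> {u..v}" for x
    using that assms(1) by (auto intro: mono_onD[OF assms(3)])
  have "integral {u..v} (\<lambda>_. h u) \<le> integral {u..v} h"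
    by (rule integral_le[OF integrable_const_ivl integrable]) (use bounds in auto)
  moreover have "integral {u..v} h \<le> integral {u..v} (\<lambda>_. h v)"
    by (rule integral_le[OF integrable integrable_const_ivl]) (use bounds in auto)
  ultimately show "(v - u) * h u \<le> integral {u..v} h" "integral {u..v} h \<le> (v - u) * h v"
    using assms(1) by simp_all
qed

lemma riemann_sums_mono_on:
  fixes h :: "real \<Rightarrow> real"
  assumes "d \<ge> 0" "continuous_on {0..real N * d} h" "mono_on {0..real N * d} h"
  shows "d * (\<Sum>k<N. h (real k * d)) \<le> integral {0..real N * d} h"
    and "integral {0..real N * d} h \<le> d * (\<Sum>k<N. h (real (Suc k) * d))"
proof -
  have "d * (\<Sum>k<m. h (real k * d)) \<le> integral {0..real m * d} h
    \<and> integral {0..real m * d} h \<le> d * (\<Sum>k<m. h (real (Suc k) * d))" if "m \<le> N" for m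
    using that
  proof (induction m)
    case (Suc m)
    let ?u = "real m * d" and ?v = "real (Suc m) * d"
    have "?v \<le> real N * d"
      using Suc.prems assms(1) by (intro mult_right_mono) auto
    then have sub: "{?u..?v} \<subseteq> {0..real N * d}" "{0..?v} \<subseteq> {0..real N * d}"
      using assms(1) by auto
    have "?u \<le> ?v"
      using assms(1) by (intro mult_right_mono) auto
    then have "integral {0..?u} h + integral {?u..?v} h = integral {0..?v} h"
      using assms(1) continuous_on_subset[OF assms(2) sub(2)]
      by (intro Henstock_Kurzweil_Integration.integral_combine integrable_continuous_interval) auto
    moreover have "d * h ?u \<le> integral {?u..?v} h" "integral {?u..?v} h \<le> d * h ?v"
      using integral_bounds_mono_on[OF \<open>?u \<le> ?v\<close> continuous_on_subset[OF assms(2) sub(1)]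
          mono_on_subset[OF assms(3) sub(1)]]
      by (simp_all add: algebra_simps)
    ultimately show ?case
      using Suc by (simp add: distrib_left)
  qed simp
  then show "d * (\<Sum>k<N. h (real k * d)) \<le> integral {0..real N * d} h"
    and "integral {0..real N * d} h \<le> d * (\<Sum>k<N. h (real (Suc k) * d))"
    by simp_all
qed

lemma riemann_sum_error_mono_on:
  fixes h :: "real \<Rightarrow> real"
  assumes "d > 0" "continuous_on {0..real (Suc n) * d} h" "mono_on {0..real (Suc n) * d} h"
    and "\<And>x. x \<in> {0..real (Suc n) * d} \<Longrightarrow> \<bar>h x\<bar> \<le> M"
  shows "\<bar>integral {0..real (Suc n) * d} h - d * (\<Sum>k<n. h (real (Suc k) * d))\<bar> \<le> d * M"
proof -
  let ?c = "real (Suc n) * d" and ?S = "\<Sum>k<n. h (real (Suc k) * d)"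
  have "(\<Sum>k<Suc n. h (real k * d)) = h 0 + ?S"
    unfolding sum.lessThan_Suc_shift by simp
  moreover have "(\<Sum>k<Suc n. h (real (Suc k) * d)) = ?S + h ?c"
    by (rule sum.lessThan_Suc)
  ultimately have "d * (h 0 + ?S) \<le> integral {0..?c} h" "integral {0..?c} h \<le> d * (?S + h ?c)"
    using riemann_sums_mono_on[of d "Suc n" h] assms(1-3) by auto
  moreover have "d * h ?c \<le> d * M" "d * (- M) \<le> d * h 0"
    using assms(1) assms(4)[of 0] assms(4)[of ?c] by (intro mult_left_mono; simp add: abs_le_iff)+
  ultimately show ?thesis
    unfolding abs_le_iff distrib_left mult_minus_right by linarith
qed

lemma riemann_sum_error_even_mono_on:
  fixes h :: "real \<Rightarrow> real"
  assumes "continuous_on {-pi..pi} h" "\<And>w. h (- w) = h w" "mono_on {0..pi} h"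
    and "\<And>w. w \<in> {0..pi} \<Longrightarrow> \<bar>h w\<bar> \<le> M"
  shows "\<bar>integral {-pi..pi} h / (2 * pi)
      - (\<Sum>j<n. h (real (Suc j) * (pi / real (Suc n)))) / (real n + 1)\<bar> \<le> M / (real n + 1)"
proof -
  define d where "d = pi / real (Suc n)"
  define S where "S = (\<Sum>j<n. h (real (Suc j) * d))"
  have d_pi: "real (Suc n) * d = pi" and "d > 0"
    by (simp_all add: d_def)
  have "continuous_on {0..pi} h"
    using assms(1) by (rule continuous_on_subset) auto
  then have err: "\<bar>integral {0..pi} h - d * S\<bar> \<le> d * M"
    using riemann_sum_error_mono_on[of d n h M] \<open>d > 0\<close> assms(3,4) unfolding d_pi S_def by blast
  have "integral {-pi..pi} h / (2 * pi) - S / (real n + 1) = (integral {0..pi} h - d * S) / pi"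
    using assms(1,2) by (subst integral_even_real) (auto simp: d_def field_simps)
  then have "\<bar>integral {-pi..pi} h / (2 * pi) - S / (real n + 1)\<bar>
      = \<bar>integral {0..pi} h - d * S\<bar> / pi"
    by simp
  also have "\<dots> \<le> d * M / pi"
    using err by (simp add: divide_right_mono)
  also have "\<dots> = M / (real n + 1)"
    by (simp add: d_def)
  finally show ?thesis
    by (simp add: S_def d_def)
qed

lemma sum_interlaced_bounds:
  fixes F :: "real \<Rightarrow> real" and \<nu> r :: "nat \<Rightarrow> real"
  assumes "n \<ge> 1" and mono: "mono_on D F" and bound: "\<And>x. x \<in> D \<Longrightarrow> \<bar>F x\<bar> \<le> M"
    and interlace: "\<And>j. j < n \<Longrightarrow> \<nu> j \<le> r j \<and> r j \<le> \<nu> (Suc j)"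
    and r_mem: "\<And>j. j < n \<Longrightarrow> r j \<in> D" and \<nu>_mem: "\<And>j. 1 \<le> j \<Longrightarrow> j \<le> n \<Longrightarrow> \<nu> j \<in> D"
  shows "(\<Sum>j<n. F (\<nu> (Suc j))) - 2 * M \<le> (\<Sum>j<n. F (r j))"
    and "(\<Sum>j<n. F (r j)) \<le> (\<Sum>j<n. F (\<nu> (Suc j)))"
proof -
  show "(\<Sum>j<n. F (r j)) \<le> (\<Sum>j<n. F (\<nu> (Suc j)))"
    using interlace r_mem \<nu>_mem by (intro sum_mono mono_onD[OF mono]) auto
  show "(\<Sum>j<n. F (\<nu> (Suc j))) - 2 * M \<le> (\<Sum>j<n. F (r j))"
  proof (cases n)
    case (Suc m)
    have "(\<Sum>j<m. F (\<nu> (Suc j))) \<le> (\<Sum>j<m. F (r (Suc j)))"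
      using interlace r_mem \<nu>_mem Suc by (intro sum_mono mono_onD[OF mono]) auto
    moreover have "- M \<le> F (r 0)" "F (\<nu> n) \<le> M"
      using bound[OF r_mem[of 0]] bound[OF \<nu>_mem[of n]] Suc by (simp_all add: abs_le_iff)
    moreover have "(\<Sum>j<n. F (r j)) = F (r 0) + (\<Sum>j<m. F (r (Suc j)))"
      unfolding Suc by (rule sum.lessThan_Suc_shift)
    moreover have "(\<Sum>j<n. F (\<nu> (Suc j))) = (\<Sum>j<m. F (\<nu> (Suc j))) + F (\<nu> n)"
      unfolding Suc by (rule sum.lessThan_Suc)
    ultimately show ?thesis
      by linarith
  qed (use assms(1) in simp)
qed

lemma sandwiched_average_error:
  fixes N S T M \<rho> :: real
  assumes "N > 0" "S - 2 * M \<le> T" "T \<le> S" "\<bar>S\<bar> \<le> N * M" "\<bar>\<rho> - S / (N + 1)\<bar> \<le> M / (N + 1)"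
  shows "\<bar>T / N - \<rho>\<bar> \<le> 4 * M / N"
proof -
  have N1: "N + 1 > 0"
    using assms(1) by simp
  have "0 \<le> N * M"
    using assms(4) by (rule order.trans[OF abs_ge_zero])
  then have "M / (N + 1) \<le> M / N"
    using assms(1) by (intro divide_left_mono) (auto simp: zero_le_mult_iff)
  moreover have "T / N \<le> S / N" "S / N - 2 * M / N \<le> T / N"
    using divide_right_mono[OF assms(3), of N] divide_right_mono[OF assms(2), of N] assms(1)
    by (simp_all add: diff_divide_distrib)
  moreover have "\<bar>S / N - S / (N + 1)\<bar> \<le> M / (N + 1)"
  proof -
    have "S / N - S / (N + 1) = (S / N) / (N + 1)"
      using assms(1) by (simp add: field_simps)
    then have "\<bar>S / N - S / (N + 1)\<bar> = \<bar>S / N\<bar> / (N + 1)"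
      by (simp only: abs_div_pos[OF N1])
    also have "\<dots> \<le> M / (N + 1)"
      using assms(1,4) N1 by (intro divide_right_mono) (simp_all add: divide_le_eq mult.commute)
    finally show ?thesis .
  qed
  ultimately show ?thesis
    using assms(5) unfolding abs_le_iff by linarith
qed

lemma spectral_average_error_mono_on:
  fixes F :: "real \<Rightarrow> real"
  assumes a: "a > 0" and n: "n \<ge> 1"
    and cont: "continuous_on {alpha' a..beta a} F"
    and bound: "\<forall>x\<in>{alpha' a..beta a}. \<bar>F x\<bar> \<le> M"
    and mono: "mono_on {alpha' a..beta a} F"
  shows "\<bar>(\<Sum>\<mu>\<in>#mus a n. F \<mu>) / real n - integral {-pi..pi} (\<lambda>w. F (gsym a w)) / (2 * pi)\<bar>
    \<le> 4 * M / real n"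
proof -
  obtain r where r: "\<And>j. j < n \<Longrightarrow> interlacing_node a n j < r j \<and> r j < interlacing_node a n (Suc j)"
    and mus: "mus a n = image_mset r (mset_set {..<n})"
    using mus_interlacing[OF a n] by blast
  have r_mem: "r j \<in> {alpha' a..beta a}" if "j < n" for j
    using that by (intro mus_mem_domain[OF a n]) (simp add: mus)
  have node_mem: "interlacing_node a n j \<in> {alpha' a..beta a}" if "1 \<le> j" for j
    using that gsym_mem_domain[OF a] by (simp add: interlacing_node_def)
  define S where "S = (\<Sum>j<n. F (interlacing_node a n (Suc j)))"
  define T where "T = (\<Sum>j<n. F (r j))"
  have "(\<Sum>\<mu>\<in>#mus a n. F \<mu>) = T"
    by (simp add: mus T_def sum_unfold_sum_mset image_mset.compositionality comp_def)
  moreover have "S - 2 * M \<le> T" "T \<le> S"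
    unfolding S_def T_def using r r_mem node_mem bound
    by (intro sum_interlaced_bounds[OF n mono]; force intro: less_imp_le)+
  moreover have "\<bar>S\<bar> \<le> real n * M"
  proof -
    have "\<bar>S\<bar> \<le> (\<Sum>j<n. \<bar>F (interlacing_node a n (Suc j))\<bar>)"
      unfolding S_def by (rule sum_abs)
    also have "\<dots> \<le> real n * M"
      using sum_mono[of "{..<n}" "\<lambda>j. \<bar>F (interlacing_node a n (Suc j))\<bar>" "\<lambda>_. M"] bound node_mem
      by simp
    finally show ?thesis .
  qed
  moreover have "\<bar>integral {-pi..pi} (\<lambda>w. F (gsym a w)) / (2 * pi) - S / (real n + 1)\<bar>
      \<le> M / (real n + 1)"
  proof -
    have "continuous_on {-pi..pi} (\<lambda>w. F (gsym a w))"
      unfolding gsym_def using gsym_mem_domain[OF a]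
      by (intro continuous_on_compose2[OF cont] continuous_intros) (auto simp: gsym_def)
    moreover have "mono_on {0..pi} (\<lambda>w. F (gsym a w))"
      using gsym_mem_domain[OF a]
      by (intro mono_onI mono_onD[OF mono]) (auto intro: mono_onD[OF gsym_mono_on[OF a]])
    moreover have S_gsym: "S = (\<Sum>j<n. F (gsym a (real (Suc j) * (pi / real (Suc n)))))"
      by (simp add: S_def interlacing_node_def)
    ultimately show ?thesis
      unfolding S_gsym using bound gsym_mem_domain[OF a]
      by (intro riemann_sum_error_even_mono_on) (auto simp: gsym_minus)
  qed
  ultimately show ?thesis
    using n by (intro sandwiched_average_error) auto
qed

lemma spectral_average_error:
  fixes F :: "real \<Rightarrow> real"
  assumes a: "a > 0" and n: "n \<ge> 1"
    and cont: "continuous_on {alpha' a..beta a} F"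
    and bound: "\<forall>x\<in>{alpha' a..beta a}. \<bar>F x\<bar> \<le> M"
    and monotone: "mono_on {alpha' a..beta a} F \<or> antimono_on {alpha' a..beta a} F"
  shows "\<bar>(\<Sum>\<mu>\<in>#mus a n. F \<mu>) / real n - integral {-pi..pi} (\<lambda>w. F (gsym a w)) / (2 * pi)\<bar>
    \<le> 4 * M / real n"
  using monotone
proof
  assume "mono_on {alpha' a..beta a} F"
  then show ?thesis
    by (rule spectral_average_error_mono_on[OF a n cont bound])
next
  assume anti: "antimono_on {alpha' a..beta a} F"
  have "mono_on {alpha' a..beta a} (\<lambda>x. - F x)"
    by (intro mono_onI) (auto intro: monotone_onD[OF anti])
  then have "\<bar>(\<Sum>\<mu>\<in>#mus a n. - F \<mu>) / real n - integral {-pi..pi} (\<lambda>w. - F (gsym a w)) / (2 * pi)\<bar>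
      \<le> 4 * M / real n"
    using cont bound
    by (intro spectral_average_error_mono_on[OF a n]) (auto intro: continuous_intros)
  moreover have "(\<Sum>\<mu>\<in>#A. - F \<mu>) = - (\<Sum>\<mu>\<in>#A. F \<mu>)" for A
    by (induction A) auto
  ultimately show ?thesis
    by (simp add: integral_neg abs_minus_commute)
qed

theorem theorem10:
  fixes a :: real
  assumes "a > 1"
  shows "\<forall>L M. \<exists>C > 0. \<forall>F :: real \<Rightarrow> real.
    (L-lipschitz_on {alpha' a..beta a} F
     \<and> (\<forall>x\<in>{alpha' a..beta a}. \<bar>F x\<bar> \<le> M)
     \<and> (mono_on {alpha' a..beta a} F \<or> antimono_on {alpha' a..beta a} F))
    \<longrightarrow> (\<forall>n\<ge>1. \<bar>(\<Sum>\<mu>\<in>#mus a n. F \<mu>) / real n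
                 - integral {-pi..pi} (\<lambda>w. F (gsym a w)) / (2 * pi)\<bar> \<le> C / real n)"
proof -
  have bound: "\<bar>(\<Sum>\<mu>\<in>#mus a n. F \<mu>) / real n - integral {-pi..pi} (\<lambda>w. F (gsym a w)) / (2 * pi)\<bar>
      \<le> (4 * \<bar>M\<bar> + 1) / real n"
    if "L-lipschitz_on {alpha' a..beta a} F" "\<forall>x\<in>{alpha' a..beta a}. \<bar>F x\<bar> \<le> M"
      "mono_on {alpha' a..beta a} F \<or> antimono_on {alpha' a..beta a} F" "n \<ge> 1"
    for L M F n
  proof -
    have "\<bar>(\<Sum>\<mu>\<in>#mus a n. F \<mu>) / real n - integral {-pi..pi} (\<lambda>w. F (gsym a w)) / (2 * pi)\<bar>
        \<le> 4 * M / real n"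
      using assms that by (intro spectral_average_error lipschitz_on_continuous_on) auto
    also have "\<dots> \<le> (4 * \<bar>M\<bar> + 1) / real n"
      by (intro divide_right_mono) auto
    finally show ?thesis .
  qed
  show ?thesis
    by (intro allI exI[where x = "4 * \<bar>M\<bar> + 1" for M] conjI impI; use bound in force)
qed

end
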